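(* Let $\{x_k\}_{k\ge 0}$ be a log-convex sequence and define $z_n=\sum_{k=0}^{n}S(n,k)x_k$ for $n\ge 0$. Then $\{z_n\}_{n\ge 0}$ is log-convex. That is, the Stirling transformation of the second kind preserves log-convexity.
   Context: $S(n,k)$ denotes the Stirling number of the second kind: the number of partitions of $\{1,\dots,n\}$ into exactly $k$ blocks, with $S(0,0)=1$ and $S(n,k)=0$ unless $0\le k\le n$. A sequence $a_0,a_1,\ldots$ of nonnegative real numbers is log-convex if $a_{k-1}a_{k+1}\ge a_k^2$ for all $k\ge 1$. *)

theory Defs
  imports Complex_Main "HOL-Combinatorics.Stirling"
begin

definition log_convex :: "(nat \<Rightarrow> real) \<Rightarrow> bool" where
  "log_convex a \<longleftrightarrow> (\<forall>k. a k \<ge> 0) \<and> (\<forall>k\<ge>1. a (k - 1) * a (k + 1) \<ge> (a k)^2)"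

end

(*
  By the recurrence S(n+1, j+1) = sum_k C(n,k) S(k,j), the Stirling transform z of x satisfies
  z_(n+1) = sum_k C(n,k) z'_k, where z' is the Stirling transform of the shifted sequence x_(k+1).
  So it suffices that the binomial transform preserves log-convexity. This follows by induction,
  since the binomial transform b of w satisfies b_(m+1) = (binomial transform of w_k + w_(k+1))_m,
  and a sum of log-convex sequences is log-convex (an AM-GM argument).
  As z_0, ..., z_N only depend on x_0, ..., x_N, both inductions are run on sequences that are
  log-convex up to index N, with N as the induction variable.
*)
theory Submission
  imports Defs
begin

lemma sum_binomial_Suc_shift:
  fixes f :: "nat \<Rightarrow> 'a::comm_semiring_1"
  shows "(\<Sum>k\<le>Suc n. of_nat (Suc n choose k) * f k) = (\<Sum>k\<le>n. of_nat (n choose k) * (f k + f (Suc k)))"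
proof -
  have "(\<Sum>k\<le>Suc n. of_nat (Suc n choose k) * f k)
      = f 0 + (\<Sum>k\<le>n. of_nat (n choose Suc k) * f (Suc k)) + (\<Sum>k\<le>n. of_nat (n choose k) * f (Suc k))"
    by (subst sum.atMost_Suc_shift) (simp add: sum.distrib algebra_simps)
  also have "f 0 + (\<Sum>k\<le>n. of_nat (n choose Suc k) * f (Suc k)) = (\<Sum>k\<le>Suc n. of_nat (n choose k) * f k)"
    by (subst sum.atMost_Suc_shift) simp
  also have "\<dots> = (\<Sum>k\<le>n. of_nat (n choose k) * f k)"
    by (simp add: binomial_eq_0)
  finally show ?thesis by (simp add: sum.distrib algebra_simps)
qed

lemma Stirling_Suc_Suc_binomial:
  "Stirling (Suc n) (Suc j) = (\<Sum>k\<le>n. (n choose k) * Stirling k j)"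
proof (induction n arbitrary: j)
  case 0
  then show ?case by (cases j) auto
next
  case (Suc n)
  have pascal: "(\<Sum>k\<le>Suc n. (Suc n choose k) * Stirling k j)
      = (\<Sum>k\<le>n. (n choose k) * Stirling k j) + (\<Sum>k\<le>n. (n choose k) * Stirling (Suc k) j)"
    by (simp only: sum_binomial_Suc_shift [where 'a = nat, unfolded of_nat_id] distrib_left sum.distrib)
  show ?case
  proof (cases j)
    case 0
    have "(\<Sum>k\<le>n. (n choose k) * Stirling (Suc k) 0) = 0" by simp
    then show ?thesis unfolding pascal using Suc.IH [of 0] 0 by simp
  next
    case (Suc i)
    have "(\<Sum>k\<le>n. (n choose k) * Stirling (Suc k) (Suc i))
        = Suc i * (\<Sum>k\<le>n. (n choose k) * Stirling k (Suc i)) + (\<Sum>k\<le>n. (n choose k) * Stirling k i)"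
      by (simp add: sum.distrib sum_distrib_left algebra_simps)
    then show ?thesis unfolding pascal using Suc.IH [of i] Suc.IH [of "Suc i"] Suc by simp
  qed
qed

lemma power2_add_le_mult_add:
  fixes a0 a1 a2 b0 b1 b2 :: real
  assumes "0 \<le> a0" "0 \<le> a2" "0 \<le> b0" "0 \<le> b2"
    and "a1\<^sup>2 \<le> a0 * a2" "b1\<^sup>2 \<le> b0 * b2"
  shows "(a1 + b1)\<^sup>2 \<le> (a0 + b0) * (a2 + b2)"
proof -
  \<comment> \<open>AM-GM: \<open>2 a1 b1 \<le> 2 sqrt (p q) \<le> p + q\<close>\<close>
  define p q where "p = a0 * b2" and "q = b0 * a2"
  have "0 \<le> p + q" using assms by (simp add: p_def q_def)
  have "(a1 * b1)\<^sup>2 \<le> (a0 * a2) * (b0 * b2)"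
    unfolding power_mult_distrib using assms by (intro mult_mono) auto
  also have "\<dots> = p * q" by (simp add: p_def q_def)
  finally have "(2 * a1 * b1)\<^sup>2 \<le> 4 * (p * q)"
    by (simp add: power_mult_distrib)
  also have "\<dots> = (p + q)\<^sup>2 - (p - q)\<^sup>2"
    by (simp add: power2_eq_square algebra_simps)
  also have "\<dots> \<le> (p + q)\<^sup>2" by simp
  finally have "\<bar>2 * a1 * b1\<bar> \<le> p + q"
    using \<open>0 \<le> p + q\<close> by (simp add: abs_le_square_iff [symmetric])
  then have "2 * a1 * b1 \<le> a0 * b2 + b0 * a2" by (simp add: p_def q_def)
  then show ?thesis using assms(5,6) by (simp add: power2_sum algebra_simps)
qed

definition log_convex_upto :: "nat \<Rightarrow> (nat \<Rightarrow> real) \<Rightarrow> bool" where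
  "log_convex_upto N a \<longleftrightarrow> (\<forall>k. 0 \<le> a k) \<and> (\<forall>k. k + 2 \<le> N \<longrightarrow> (a (Suc k))\<^sup>2 \<le> a k * a (k + 2))"

lemma log_convex_iff_log_convex_upto: "log_convex a \<longleftrightarrow> (\<forall>N. log_convex_upto N a)"
proof -
  have "(\<forall>k\<ge>1. (a k)\<^sup>2 \<le> a (k - 1) * a (k + 1)) \<longleftrightarrow> (\<forall>k. (a (Suc k))\<^sup>2 \<le> a k * a (k + 2))"
    by (metis Suc_eq_plus1 add_2_eq_Suc' diff_Suc_1 le_add2 le_add_diff_inverse2)
  then show ?thesis
    unfolding log_convex_def log_convex_upto_def by (metis le_add1)
qed

lemma log_convex_upto_0: "log_convex_upto 0 a \<longleftrightarrow> (\<forall>k. 0 \<le> a k)"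
  by (simp add: log_convex_upto_def)

lemma log_convex_upto_Suc:
  "log_convex_upto (Suc N) a \<longleftrightarrow>
     0 \<le> a 0 \<and> (N \<noteq> 0 \<longrightarrow> (a 1)\<^sup>2 \<le> a 0 * a 2) \<and> log_convex_upto N (\<lambda>k. a (Suc k))"
proof -
  have all_nat_Suc: "(\<forall>k. P k) \<longleftrightarrow> P 0 \<and> (\<forall>k. P (Suc k))" for P :: "nat \<Rightarrow> bool"
    by (metis not0_implies_Suc)
  show ?thesis
    unfolding log_convex_upto_def by (subst (1 2) all_nat_Suc) (auto simp: numeral_2_eq_2)
qed

lemma log_convex_upto_mono: "log_convex_upto N a \<Longrightarrow> M \<le> N \<Longrightarrow> log_convex_upto M a"
  unfolding log_convex_upto_def by auto

lemma log_convex_upto_add: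
  "log_convex_upto N a \<Longrightarrow> log_convex_upto N b \<Longrightarrow> log_convex_upto N (\<lambda>k. a k + b k)"
  unfolding log_convex_upto_def by (auto intro!: power2_add_le_mult_add)

definition binomial_transform :: "(nat \<Rightarrow> real) \<Rightarrow> nat \<Rightarrow> real" where
  "binomial_transform a n = (\<Sum>k\<le>n. real (n choose k) * a k)"

definition stirling_transform :: "(nat \<Rightarrow> real) \<Rightarrow> nat \<Rightarrow> real" where
  "stirling_transform a n = (\<Sum>k\<le>n. real (Stirling n k) * a k)"

lemma binomial_transform_Suc:
  "binomial_transform a (Suc n) = binomial_transform (\<lambda>k. a k + a (Suc k)) n"
  unfolding binomial_transform_def by (rule sum_binomial_Suc_shift)

lemma stirling_transform_Suc:
  "stirling_transform a (Suc n) = binomial_transform (stirling_transform (\<lambda>k. a (Suc k))) n"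
proof -
  have "stirling_transform a (Suc n) = (\<Sum>j\<le>n. real (Stirling (Suc n) (Suc j)) * a (Suc j))"
    unfolding stirling_transform_def by (subst sum.atMost_Suc_shift) simp
  also have "\<dots> = (\<Sum>j\<le>n. \<Sum>k\<le>n. real (n choose k) * (real (Stirling k j) * a (Suc j)))"
    by (simp only: Stirling_Suc_Suc_binomial of_nat_sum of_nat_mult sum_distrib_right mult.assoc)
  also have "\<dots> = (\<Sum>k\<le>n. real (n choose k) * (\<Sum>j\<le>n. real (Stirling k j) * a (Suc j)))"
    by (subst sum.swap) (simp add: sum_distrib_left)
  also have "\<dots> = (\<Sum>k\<le>n. real (n choose k) * stirling_transform (\<lambda>k. a (Suc k)) k)"
  proof (intro sum.cong refl arg_cong2 [where f = "(*)"])
    fix k assume "k \<in> {..n}"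
    then show "(\<Sum>j\<le>n. real (Stirling k j) * a (Suc j)) = stirling_transform (\<lambda>k. a (Suc k)) k"
      unfolding stirling_transform_def by (intro sum.mono_neutral_right) auto
  qed
  finally show ?thesis unfolding binomial_transform_def .
qed

lemma log_convex_upto_binomial_transform:
  "log_convex_upto N a \<Longrightarrow> log_convex_upto N (binomial_transform a)"
proof (induction N arbitrary: a)
  case 0
  then show ?case
    unfolding log_convex_upto_0 binomial_transform_def by (auto intro!: sum_nonneg)
next
  case (Suc N)
  then have a0: "0 \<le> a 0" and a012: "N \<noteq> 0 \<Longrightarrow> (a 1)\<^sup>2 \<le> a 0 * a 2"
    and shift: "log_convex_upto N (\<lambda>k. a (Suc k))"
    by (simp_all add: log_convex_upto_Suc)
  have a1: "0 \<le> a 1" using Suc.prems unfolding log_convex_upto_def by blast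
  have "log_convex_upto N (\<lambda>k. a k + a (Suc k))"
    using log_convex_upto_mono [OF Suc.prems] shift by (intro log_convex_upto_add) auto
  then have "log_convex_upto N (\<lambda>k. binomial_transform a (Suc k))"
    using Suc.IH by (simp add: binomial_transform_Suc)
  moreover have "N \<noteq> 0 \<Longrightarrow> (binomial_transform a 1)\<^sup>2 \<le> binomial_transform a 0 * binomial_transform a 2"
    using a012 mult_nonneg_nonneg [OF a0 a1]
    by (simp add: binomial_transform_def numeral_2_eq_2 power2_eq_square algebra_simps)
  moreover have "binomial_transform a 0 = a 0" by (simp add: binomial_transform_def)
  ultimately show ?case using a0 by (simp add: log_convex_upto_Suc)
qed

lemma log_convex_upto_stirling_transform:
  "log_convex_upto N a \<Longrightarrow> log_convex_upto N (stirling_transform a)"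
proof (induction N arbitrary: a)
  case 0
  then show ?case
    unfolding log_convex_upto_0 stirling_transform_def by (auto intro!: sum_nonneg)
next
  case (Suc N)
  then have a0: "0 \<le> a 0" and a012: "N \<noteq> 0 \<Longrightarrow> (a 1)\<^sup>2 \<le> a 0 * a 2"
    and shift: "log_convex_upto N (\<lambda>k. a (Suc k))"
    by (simp_all add: log_convex_upto_Suc)
  have a1: "0 \<le> a 1" using Suc.prems unfolding log_convex_upto_def by blast
  have "log_convex_upto N (\<lambda>k. stirling_transform a (Suc k))"
    using Suc.IH [OF shift] by (simp add: stirling_transform_Suc log_convex_upto_binomial_transform)
  moreover have "N \<noteq> 0 \<Longrightarrow> (stirling_transform a 1)\<^sup>2 \<le> stirling_transform a 0 * stirling_transform a 2"
    using a012 mult_nonneg_nonneg [OF a0 a1]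
    by (simp add: stirling_transform_def numeral_2_eq_2 power2_eq_square algebra_simps)
  moreover have "stirling_transform a 0 = a 0" by (simp add: stirling_transform_def)
  ultimately show ?case using a0 by (simp add: log_convex_upto_Suc)
qed

theorem mainTheorem2:
  fixes x :: "nat \<Rightarrow> real"
  assumes "log_convex x"
  shows "log_convex (\<lambda>n. \<Sum>k=0..n. real (Stirling n k) * x k)"
proof -
  have "(\<lambda>n. \<Sum>k=0..n. real (Stirling n k) * x k) = stirling_transform x"
    by (simp add: stirling_transform_def atLeast0AtMost fun_eq_iff)
  then show ?thesis
    using assms log_convex_upto_stirling_transform by (simp add: log_convex_iff_log_convex_upto)
qed

end
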